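(* Let $p(x)\in\mathbb{Q}[x]$ be a polynomial with positive leading coefficient and $p(0)=0$. Then the set $\mathbb{N}\cap\{p(n):n\in\mathbb{N}\}$ is large.
   Context: A set $D\subseteq\mathbb{N}$ is $r$-large if for every $r$-coloring of $\mathbb{N}$ and every $k\ge1$ there is a monochromatic arithmetic progression $a,a+d,\dots,a+(k-1)d$ in $\mathbb{N}$ with $d\in D$; it is large if it is $r$-large for every $r\in\mathbb{N}$. (One may use the known fact that this holds for polynomials with integer coefficients, positive leading coefficient and zero constant term.) *)

theory Defs
  imports "HOL-Computational_Algebra.Polynomial"
begin

text \<open>Convention: \<nat> = {1,2,3,...} (positive integers).\<close>

definition r_large :: "nat \<Rightarrow> nat set \<Rightarrow> bool" where
  "r_large r D \<longleftrightarrow>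
     (\<forall>chi :: nat \<Rightarrow> nat. (\<forall>x. chi x < r) \<longrightarrow>
        (\<forall>k \<ge> 1. \<exists>a d. a \<ge> 1 \<and> d \<in> D \<and> (\<forall>i < k. chi (a + i * d) = chi a)))"

definition large :: "nat set \<Rightarrow> bool" where
  "large D \<longleftrightarrow> (\<forall>r \<ge> 1. r_large r D)"

end

theory Submission
  imports Defs "HOL-Library.Multiset_Order" "HOL-Library.Countable"
begin

text \<open>For a common denominator M of p, q(x) = p(M x) is an integer polynomial with
  q(0) = 0 whose values at large arguments are positive elements of the set, so it suffices
  to find, for every finite colouring, monochromatic progressions a, a + q(d), \<dots>,
  a + (k - 1) q(d), i.e. monochromatic configurations a + P(d) for the family
  P = {i q | i < k}. This is the polynomial van der Waerden theorem of Bergelson and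
  Leibman, proved by Walters' PET induction: for p \<in> P of minimal degree the families
  {q(y + x) - q(y) - p(x) | q \<in> P, y \<in> Y} are smaller in the well-founded order comparing,
  from the top degree down, the numbers of distinct leading coefficients, and applying them
  to colourings of finite windows of \<int> builds ever longer colour-focused configurations;
  as there are only finitely many colours, one of them yields a monochromatic configuration.\<close>

section \<open>PET induction\<close>

definition pet_difference :: "'a::comm_ring_1 poly \<Rightarrow> 'a poly \<Rightarrow> 'a \<Rightarrow> 'a poly" where
  "pet_difference p q y = pcompose q [:y, 1:] - [:poly q y:] - p"

lemma poly_pet_difference [simp]:
  "poly (pet_difference p q y) x = poly q (y + x) - poly q y - poly p x"
  by (simp add: pet_difference_def poly_pcompose)

lemma degree_pet_difference_le:
  fixes p q :: "'a::idom poly"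
  assumes "degree p \<le> degree q"
  shows "degree (pet_difference p q y) \<le> degree q"
proof -
  have "degree (pcompose q [:y, 1:] - [:poly q y:]) \<le> degree q"
    by (rule degree_diff_le) (auto simp: degree_pcompose)
  then show ?thesis
    unfolding pet_difference_def using assms by (rule degree_diff_le)
qed

lemma coeff_pet_difference_degree:
  fixes p q :: "'a::idom poly"
  assumes "1 \<le> degree q"
  shows "coeff (pet_difference p q y) (degree q) = lead_coeff q - coeff p (degree q)"
proof -
  have "coeff (pcompose q [:y, 1:]) (degree q) = lead_coeff q"
    using lead_coeff_comp[of "[:y, 1:]" q] by (simp add: degree_pcompose)
  then show ?thesis
    using assms by (simp add: pet_difference_def coeff_pCons split: nat.split)
qed

lemma pet_difference_higher_degree:
  fixes p q :: "'a::idom poly"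
  assumes "degree p < degree q"
  shows "degree (pet_difference p q y) = degree q"
    and "lead_coeff (pet_difference p q y) = lead_coeff q"
proof -
  have coeff: "coeff (pet_difference p q y) (degree q) = lead_coeff q"
    using assms coeff_pet_difference_degree[of q p y] by (simp add: coeff_eq_0)
  have "q \<noteq> 0"
    using assms by auto
  then have "degree q \<le> degree (pet_difference p q y)"
    using coeff by (intro le_degree) simp
  then show "degree (pet_difference p q y) = degree q"
    using degree_pet_difference_le[of p q y] assms by simp
  with coeff show "lead_coeff (pet_difference p q y) = lead_coeff q"
    by simp
qed

definition pet_family :: "'a::comm_ring_1 poly set \<Rightarrow> 'a poly \<Rightarrow> 'a set \<Rightarrow> 'a poly set" where
  "pet_family P p Y = {pet_difference p q y | q y. q \<in> P \<and> q \<noteq> 0 \<and> y \<in> Y}"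

lemma finite_pet_family:
  assumes "finite P" "finite Y"
  shows "finite (pet_family P p Y)"
proof -
  have "pet_family P p Y \<subseteq> (\<lambda>(q, y). pet_difference p q y) ` (P \<times> Y)"
    by (auto simp: pet_family_def)
  then show ?thesis
    using assms by (auto intro: finite_subset)
qed

lemma poly_0_pet_family:
  "poly p 0 = 0 \<Longrightarrow> r \<in> pet_family P p Y \<Longrightarrow> poly r 0 = 0"
  by (auto simp: pet_family_def)

definition lead_coeffs_of_degree :: "'a::zero poly set \<Rightarrow> nat \<Rightarrow> 'a set" where
  "lead_coeffs_of_degree P j = lead_coeff ` {q \<in> P. q \<noteq> 0 \<and> degree q = j}"

definition pet_weight :: "'a::zero poly set \<Rightarrow> nat multiset" where
  "pet_weight P = image_mset fst (mset_set ((\<lambda>q. (degree q, lead_coeff q)) ` {q \<in> P. q \<noteq> 0}))"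

lemma finite_lead_coeffs_of_degree:
  "finite P \<Longrightarrow> finite (lead_coeffs_of_degree P j)"
  by (simp add: lead_coeffs_of_degree_def)

lemma count_pet_weight:
  assumes "finite P"
  shows "count (pet_weight P) j = card (lead_coeffs_of_degree P j)"
proof -
  let ?S = "(\<lambda>q. (degree q, lead_coeff q)) ` {q \<in> P. q \<noteq> 0}"
  have "count (pet_weight P) j = card (fst -` {j} \<inter> ?S)"
    unfolding pet_weight_def count_image_mset using assms by simp
  also have "fst -` {j} \<inter> ?S = Pair j ` lead_coeffs_of_degree P j"
    by (auto simp: lead_coeffs_of_degree_def image_iff)
  also have "card \<dots> = card (lead_coeffs_of_degree P j)"
    by (rule card_image) (simp add: inj_on_def)
  finally show ?thesis .
qed

lemma less_multiset_if_top_count_less: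
  fixes M N :: "'a::linorder multiset"
  assumes less: "count M k < count N k" and above: "\<And>j. k < j \<Longrightarrow> count M j \<le> count N j"
  shows "M < N"
  unfolding less_multiset_less_multiset\<^sub>H\<^sub>O less_multiset\<^sub>H\<^sub>O_def
proof (intro conjI allI impI)
  show "M \<noteq> N"
    using less by auto
  fix y assume "count N y < count M y"
  then have "y < k"
    using less above[of y] by (cases y k rule: linorder_cases) auto
  then show "\<exists>x>y. count M x < count N x"
    using less by blast
qed

lemma lead_coeffs_of_degree_pet_family_above:
  fixes P :: "'a::idom poly set"
  assumes "degree p < j" and minimal: "\<And>q. q \<in> P \<Longrightarrow> q \<noteq> 0 \<Longrightarrow> degree p \<le> degree q"
  shows "lead_coeffs_of_degree (pet_family P p Y) j \<subseteq> lead_coeffs_of_degree P j"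
proof
  fix c assume "c \<in> lead_coeffs_of_degree (pet_family P p Y) j"
  then obtain q y where q: "q \<in> P" "q \<noteq> 0" "degree (pet_difference p q y) = j"
      "c = lead_coeff (pet_difference p q y)"
    by (auto simp: lead_coeffs_of_degree_def pet_family_def)
  have "degree p < degree q"
    using degree_pet_difference_le[OF minimal[OF q(1,2)], of y] q(3) assms(1) by linarith
  then show "c \<in> lead_coeffs_of_degree P j"
    using q pet_difference_higher_degree[of p q y] by (auto simp: lead_coeffs_of_degree_def)
qed

lemma lead_coeffs_of_degree_pet_family_min:
  fixes P :: "'a::idom poly set"
  assumes "1 \<le> degree p" and minimal: "\<And>q. q \<in> P \<Longrightarrow> q \<noteq> 0 \<Longrightarrow> degree p \<le> degree q"
  shows "lead_coeffs_of_degree (pet_family P p Y) (degree p) \<subseteq>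
    (\<lambda>c. c - lead_coeff p) ` (lead_coeffs_of_degree P (degree p) - {lead_coeff p})"
proof
  fix c assume "c \<in> lead_coeffs_of_degree (pet_family P p Y) (degree p)"
  then obtain q y where q: "q \<in> P" "q \<noteq> 0" "pet_difference p q y \<noteq> 0"
      "degree (pet_difference p q y) = degree p" "c = lead_coeff (pet_difference p q y)"
    by (auto simp: lead_coeffs_of_degree_def pet_family_def)
  have "degree q = degree p"
    using pet_difference_higher_degree(1)[of p q y] minimal[OF q(1,2)] q(4) by fastforce
  moreover have "c = lead_coeff q - lead_coeff p"
    using coeff_pet_difference_degree[of q p y] q(4,5) assms(1) calculation by simp
  moreover have "c \<noteq> 0"
    using q(3,5) by simp
  ultimately show "c \<in> (\<lambda>c. c - lead_coeff p) ` (lead_coeffs_of_degree P (degree p) - {lead_coeff p})"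
    using q(1,2) by (force simp: lead_coeffs_of_degree_def)
qed

lemma pet_weight_pet_family_less:
  fixes P :: "'a::idom poly set"
  assumes finite: "finite P" "finite Y" and p: "p \<in> P" "1 \<le> degree p"
    and minimal: "\<And>q. q \<in> P \<Longrightarrow> q \<noteq> 0 \<Longrightarrow> degree p \<le> degree q"
  shows "pet_weight (pet_family P p Y) < pet_weight P"
proof -
  let ?Q = "pet_family P p Y" and ?C = lead_coeffs_of_degree
  have fin: "finite (?C P j)" for j
    using finite(1) by (rule finite_lead_coeffs_of_degree)
  have "card (?C ?Q (degree p)) \<le> card ((\<lambda>c. c - lead_coeff p) ` (?C P (degree p) - {lead_coeff p}))"
    using lead_coeffs_of_degree_pet_family_min[OF p(2) minimal] fin by (intro card_mono) auto
  also have "\<dots> \<le> card (?C P (degree p) - {lead_coeff p})"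
    by (rule card_image_le) (use fin in auto)
  also have "\<dots> < card (?C P (degree p))"
    using p fin by (intro card_Diff1_less) (force simp: lead_coeffs_of_degree_def)+
  finally have "card (?C ?Q (degree p)) < card (?C P (degree p))" .
  moreover have "card (?C ?Q j) \<le> card (?C P j)" if "degree p < j" for j
    using lead_coeffs_of_degree_pet_family_above[OF that minimal] fin by (rule card_mono[rotated])
  ultimately show ?thesis
    using finite_pet_family[OF finite] finite(1)
    by (intro less_multiset_if_top_count_less[where k = "degree p"]) (simp_all add: count_pet_weight)
qed

section \<open>Colour focusing\<close>

definition has_mono_config :: "int poly set \<Rightarrow> int \<Rightarrow> int \<Rightarrow> (int \<Rightarrow> 'c) \<Rightarrow> bool" where
  "has_mono_config P L N \<chi> \<longleftrightarrow>
     (\<exists>a d. \<bar>a\<bar> \<le> N \<and> L \<le> d \<and> d \<le> N \<and> (\<forall>q\<in>P. \<chi> (a + poly q d) = \<chi> a))"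

definition polynomial_vdW :: "int poly set \<Rightarrow> bool" where
  "polynomial_vdW P \<longleftrightarrow>
     (\<forall>F :: nat set. finite F \<longrightarrow>
        (\<forall>L\<ge>0. \<exists>N\<ge>0. \<forall>\<chi>. range \<chi> \<subseteq> F \<longrightarrow> has_mono_config P L N \<chi>))"

text \<open>The spokes a + P(e i) of a focused configuration are monochromatic apart from the base
  point a, in pairwise distinct colours. If the colour of some spoke equals that of a, the spoke
  is a monochromatic configuration; otherwise the configuration grows by one spoke, moving the
  base point by p(d) for a d along which the colours of a whole window around it repeat.\<close>

definition focused_at :: "int poly set \<Rightarrow> int poly \<Rightarrow> (int \<Rightarrow> 'c) \<Rightarrow> int \<Rightarrow> (nat \<Rightarrow> int) \<Rightarrow> nat \<Rightarrow> bool"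
  where
  "focused_at P p \<chi> a e s \<longleftrightarrow>
     (\<forall>i<s. \<forall>q\<in>P. q \<noteq> 0 \<longrightarrow> \<chi> (a + poly q (e i)) = \<chi> (a + poly p (e i))) \<and>
     inj_on (\<lambda>i. \<chi> (a + poly p (e i))) {..<s}"

definition focused_config :: "int poly set \<Rightarrow> int poly \<Rightarrow> int \<Rightarrow> int \<Rightarrow> (int \<Rightarrow> 'c) \<Rightarrow> nat \<Rightarrow> bool"
  where
  "focused_config P p L N \<chi> s \<longleftrightarrow>
     (\<exists>a e. \<bar>a\<bar> \<le> N \<and> (\<forall>i<s. L \<le> e i \<and> e i \<le> N) \<and> focused_at P p \<chi> a e s)"

lemma polynomial_vdW_if_all_zero:
  assumes "\<And>q. q \<in> P \<Longrightarrow> q = 0"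
  shows "polynomial_vdW P"
proof -
  have "has_mono_config P L L \<chi>" if "0 \<le> L" for L and \<chi> :: "int \<Rightarrow> nat"
    unfolding has_mono_config_def by (rule exI[of _ 0], rule exI[of _ L]) (use assms that in force)
  then show ?thesis
    unfolding polynomial_vdW_def by blast
qed

lemma has_mono_config_translate:
  assumes "has_mono_config P L N (\<lambda>x. \<chi> (x + t))" "\<bar>t\<bar> \<le> M"
  shows "has_mono_config P L (N + M) \<chi>"
proof -
  obtain a d where "\<bar>a\<bar> \<le> N" "L \<le> d" "d \<le> N" "\<forall>q\<in>P. \<chi> (a + poly q d + t) = \<chi> (a + t)"
    using assms(1) unfolding has_mono_config_def by blast
  then have "\<bar>a + t\<bar> \<le> N + M \<and> L \<le> d \<and> d \<le> N + M \<and> (\<forall>q\<in>P. \<chi> (a + t + poly q d) = \<chi> (a + t))"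
    using assms(2) by (auto simp: add_ac)
  then show ?thesis
    unfolding has_mono_config_def by blast
qed

lemma focused_at_translate:
  "focused_at P p (\<lambda>x. \<chi> (x + t)) a e s \<longleftrightarrow> focused_at P p \<chi> (a + t) e s"
  by (simp add: focused_at_def add_ac)

lemma focused_config_card_le:
  assumes "focused_config P p L N \<chi> s" "range \<chi> \<subseteq> F" "finite F"
  shows "s \<le> card F"
proof -
  obtain a e where "inj_on (\<lambda>i. \<chi> (a + poly p (e i))) {..<s}"
    using assms(1) unfolding focused_config_def focused_at_def by blast
  from card_inj_on_le[OF this] show ?thesis
    using assms(2,3) by auto
qed

lemma focused_at_extend:
  assumes zero: "\<forall>q\<in>P. poly q 0 = 0" and p: "p \<in> P" "p \<noteq> 0"
    and focused: "focused_at P p \<chi> b e s"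
    and fresh: "\<forall>i<s. \<chi> (b + poly p (e i)) \<noteq> \<chi> b"
    and shifted: "\<And>q y. q \<in> P \<Longrightarrow> q \<noteq> 0 \<Longrightarrow> y = 0 \<or> y \<in> e ` {..<s} \<Longrightarrow>
      \<chi> (b - poly p d + poly q (y + d)) = \<chi> (b + poly q y)"
  shows "focused_at P p \<chi> (b - poly p d) (\<lambda>i. if i < s then e i + d else d) (Suc s)"
proof -
  define c where "c i = (if i < s then \<chi> (b + poly p (e i)) else \<chi> b)" for i
  have colour: "\<chi> (b - poly p d + poly q (if i < s then e i + d else d)) = c i"
    if "i < Suc s" "q \<in> P" "q \<noteq> 0" for i q
  proof (cases "i < s")
    case True
    then show ?thesis
      using shifted[of q "e i"] focused that(2,3) by (simp add: c_def focused_at_def)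
  next
    case False
    then show ?thesis
      using shifted[of q 0] zero that(2,3) by (simp add: c_def)
  qed
  have "inj_on c {..<s} \<longleftrightarrow> inj_on (\<lambda>i. \<chi> (b + poly p (e i))) {..<s}"
    by (rule inj_on_cong) (simp add: c_def)
  then have "inj_on c {..<s}"
    using focused unfolding focused_at_def by blast
  moreover have "c s \<notin> c ` {..<s}"
    using fresh by (auto simp: c_def)
  ultimately have "inj_on c {..<Suc s}"
    by (simp add: lessThan_Suc)
  moreover have "inj_on c {..<Suc s} \<longleftrightarrow>
      inj_on (\<lambda>i. \<chi> (b - poly p d + poly p (if i < s then e i + d else d))) {..<Suc s}"
    using colour p by (intro inj_on_cong) auto
  ultimately show ?thesis
    unfolding focused_at_def using colour p by simp
qed

definition window_colour :: "int \<Rightarrow> (int \<Rightarrow> 'c::countable) \<Rightarrow> int \<Rightarrow> nat" where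
  "window_colour W \<chi> t = to_nat (map (\<lambda>j. \<chi> (t + j)) [-W..W])"

lemma window_colour_eqD:
  assumes "window_colour W \<chi> s = window_colour W \<chi> t" "\<bar>j\<bar> \<le> W"
  shows "\<chi> (s + j) = \<chi> (t + j)"
proof -
  have "map (\<lambda>j. \<chi> (s + j)) [-W..W] = map (\<lambda>j. \<chi> (t + j)) [-W..W]"
    using assms(1) by (simp add: window_colour_def)
  moreover have "j \<in> set [-W..W]"
    using assms(2) by auto
  ultimately show ?thesis
    by (simp add: map_eq_conv)
qed

lemma window_colour_palette:
  fixes F :: "'c::countable set"
  assumes "finite F"
  obtains F' where "finite F'" "\<And>\<chi>. range \<chi> \<subseteq> F \<Longrightarrow> range (window_colour W \<chi>) \<subseteq> F'"
proof
  let ?F' = "to_nat ` {xs. set xs \<subseteq> F \<and> length xs = length [-W..W]}"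
  show "finite ?F'"
    using assms by (intro finite_imageI finite_lists_length_eq)
  show "range (window_colour W \<chi>) \<subseteq> ?F'" if "range \<chi> \<subseteq> F" for \<chi>
    unfolding window_colour_def
  proof (intro image_subsetI imageI CollectI conjI)
    show "set (map (\<lambda>j. \<chi> (t + j)) [-W..W]) \<subseteq> F" for t
      using that by auto
  qed simp
qed

lemma abs_poly_bounded_on_finite:
  fixes P :: "'a::linordered_idom poly set"
  assumes "finite P" "finite Y"
  obtains B where "0 \<le> B" "\<And>q y. q \<in> P \<Longrightarrow> y \<in> Y \<Longrightarrow> \<bar>poly q y\<bar> \<le> B"
proof
  let ?B = "\<Sum>(q, y) \<in> P \<times> Y. \<bar>poly q y\<bar>"
  show "0 \<le> ?B"
    by (intro sum_nonneg) auto
  show "\<bar>poly q y\<bar> \<le> ?B" if "q \<in> P" "y \<in> Y" for q y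
    using member_le_sum[of "(q, y)" "P \<times> Y" "\<lambda>(q, y). \<bar>poly q y\<bar>"] that assms by auto
qed

lemma window_colour_repeat_shift:
  assumes "window_colour W \<chi> (t + poly (pet_difference p q y) d) = window_colour W \<chi> t"
    and "\<bar>a + poly q y\<bar> \<le> W"
  shows "\<chi> (a + t - poly p d + poly q (y + d)) = \<chi> (a + t + poly q y)"
proof -
  have "\<chi> (t + poly (pet_difference p q y) d + (a + poly q y)) = \<chi> (t + (a + poly q y))"
    using assms by (rule window_colour_eqD)
  moreover have "t + poly (pet_difference p q y) d + (a + poly q y) = a + t - poly p d + poly q (y + d)"
    by simp
  moreover have "t + (a + poly q y) = a + t + poly q y"
    by simp
  ultimately show ?thesis
    by metis
qed

lemma focused_config_grow:
  assumes zero: "\<forall>q\<in>P. poly q 0 = 0" and p: "p \<in> P" "p \<noteq> 0"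
    and focused: "focused_at P p \<chi> b e s"
    and e: "\<And>i. i < s \<Longrightarrow> L \<le> e i \<and> e i \<le> Ns" and "0 \<le> L" "0 \<le> Ns"
    and shifted: "\<And>q y. q \<in> P \<Longrightarrow> q \<noteq> 0 \<Longrightarrow> y \<in> {0..Ns} \<Longrightarrow>
      \<chi> (b - poly p d + poly q (y + d)) = \<chi> (b + poly q y)"
    and bounds: "\<bar>b\<bar> \<le> N" "\<bar>b - poly p d\<bar> \<le> N" "L \<le> d" "Ns + d \<le> N"
  shows "has_mono_config P L N \<chi> \<or> focused_config P p L N \<chi> (Suc s)"
proof (cases "\<exists>i<s. \<chi> (b + poly p (e i)) = \<chi> b")
  case True
  then obtain i where i: "i < s" "\<chi> (b + poly p (e i)) = \<chi> b"
    by blast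
  have "\<chi> (b + poly q (e i)) = \<chi> b" if "q \<in> P" for q
    using focused i that unfolding focused_at_def by (cases "q = 0") auto
  moreover have "L \<le> e i" "e i \<le> N"
    using e[OF i(1)] bounds \<open>0 \<le> L\<close> by auto
  ultimately have "has_mono_config P L N \<chi>"
    unfolding has_mono_config_def using bounds(1) by blast
  then show ?thesis ..
next
  case False
  have spokes: "y \<in> {0..Ns}" if "y = 0 \<or> y \<in> e ` {..<s}" for y
    using that e \<open>0 \<le> Ns\<close> \<open>0 \<le> L\<close> by (force intro: order_trans)
  define e' where "e' = (\<lambda>i. if i < s then e i + d else d)"
  have "focused_at P p \<chi> (b - poly p d) e' (Suc s)"
    unfolding e'_def
    by (rule focused_at_extend[OF zero p focused]) (use False shifted spokes in auto)
  moreover have "L \<le> e' i \<and> e' i \<le> N" for i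
    using e[of i] bounds \<open>0 \<le> L\<close> \<open>0 \<le> Ns\<close> by (auto simp: e'_def)
  ultimately have "focused_config P p L N \<chi> (Suc s)"
    unfolding focused_config_def using bounds(2) by blast
  then show ?thesis ..
qed

lemma focused_config_Suc:
  fixes F :: "nat set"
  assumes zero: "\<forall>q\<in>P. poly q 0 = 0" and "finite P" and p: "p \<in> P" "p \<noteq> 0"
    and "finite F" "0 \<le> L" "0 \<le> Ns"
    and family: "polynomial_vdW (pet_family P p {0..Ns})"
    and IH: "\<And>\<chi>. range \<chi> \<subseteq> F \<Longrightarrow> has_mono_config P L Ns \<chi> \<or> focused_config P p L Ns \<chi> s"
  obtains N where "0 \<le> N"
    "\<And>\<chi>. range \<chi> \<subseteq> F \<Longrightarrow> has_mono_config P L N \<chi> \<or> focused_config P p L N \<chi> (Suc s)"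
proof -
  obtain B where "0 \<le> B" and B: "\<And>q y. q \<in> P \<Longrightarrow> y \<in> {0..Ns} \<Longrightarrow> \<bar>poly q y\<bar> \<le> B"
    using abs_poly_bounded_on_finite[OF \<open>finite P\<close> finite_atLeastAtMost_int] by blast
  define W where "W = Ns + B"
  obtain F' where "finite F'"
    and F': "\<And>\<chi>. range \<chi> \<subseteq> F \<Longrightarrow> range (window_colour W \<chi>) \<subseteq> F'"
    using window_colour_palette[OF \<open>finite F\<close>] by blast
  have "\<forall>L\<ge>0. \<exists>N'\<ge>0. \<forall>\<chi>. range \<chi> \<subseteq> F' \<longrightarrow> has_mono_config (pet_family P p {0..Ns}) L N' \<chi>"
    using family \<open>finite F'\<close> unfolding polynomial_vdW_def by blast
  then obtain N' where "0 \<le> N'"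
    and N': "\<And>\<chi>. range \<chi> \<subseteq> F' \<Longrightarrow> has_mono_config (pet_family P p {0..Ns}) L N' \<chi>"
    using \<open>0 \<le> L\<close> by blast
  obtain B' where "0 \<le> B'"
    and B': "\<And>q d. q \<in> {p} \<Longrightarrow> d \<in> {0..N'} \<Longrightarrow> \<bar>poly q d\<bar> \<le> B'"
    using abs_poly_bounded_on_finite[OF finite.insertI[OF finite.emptyI] finite_atLeastAtMost_int]
    by blast
  show ?thesis
  proof (rule that[of "Ns + N' + B'"])
    show "0 \<le> Ns + N' + B'"
      using \<open>0 \<le> Ns\<close> \<open>0 \<le> N'\<close> \<open>0 \<le> B'\<close> by simp
    fix \<chi> :: "int \<Rightarrow> nat" assume \<chi>: "range \<chi> \<subseteq> F"
    obtain t d where t: "\<bar>t\<bar> \<le> N'" and d: "L \<le> d" "d \<le> N'" and repeat: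
        "\<And>r. r \<in> pet_family P p {0..Ns} \<Longrightarrow> window_colour W \<chi> (t + poly r d) = window_colour W \<chi> t"
      using N'[OF F'[OF \<chi>]] unfolding has_mono_config_def by blast
    have "range (\<lambda>x. \<chi> (x + t)) \<subseteq> F"
      using \<chi> by auto
    from IH[OF this]
    show "has_mono_config P L (Ns + N' + B') \<chi> \<or> focused_config P p L (Ns + N' + B') \<chi> (Suc s)"
    proof
      assume "has_mono_config P L Ns (\<lambda>x. \<chi> (x + t))"
      from has_mono_config_translate[OF this, of "N' + B'"] show ?thesis
        using t \<open>0 \<le> B'\<close> by (simp add: add.assoc)
    next
      assume "focused_config P p L Ns (\<lambda>x. \<chi> (x + t)) s"
      then obtain a e where a: "\<bar>a\<bar> \<le> Ns" and e: "\<And>i. i < s \<Longrightarrow> L \<le> e i \<and> e i \<le> Ns"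
        and focused: "focused_at P p \<chi> (a + t) e s"
        unfolding focused_config_def focused_at_translate by blast
      show ?thesis
      proof (rule focused_config_grow[OF zero p focused e \<open>0 \<le> L\<close> \<open>0 \<le> Ns\<close>])
        fix q y assume q: "q \<in> P" "q \<noteq> 0" and y: "y \<in> {0..Ns}"
        have "pet_difference p q y \<in> pet_family P p {0..Ns}"
          using q y unfolding pet_family_def by blast
        moreover have "\<bar>a + poly q y\<bar> \<le> W"
          using abs_triangle_ineq[of a "poly q y"] a B[OF q(1) y] unfolding W_def by linarith
        ultimately show "\<chi> (a + t - poly p d + poly q (y + d)) = \<chi> (a + t + poly q y)"
          using repeat window_colour_repeat_shift by blast
      next
        show "\<bar>a + t - poly p d\<bar> \<le> Ns + N' + B'"
          using a t B'[of p d] d \<open>0 \<le> L\<close> by auto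
      qed (use a t d \<open>0 \<le> B'\<close> in auto)
    qed
  qed
qed

lemma polynomial_vdW_by_focusing:
  assumes zero: "\<forall>q\<in>P. poly q 0 = 0" and "finite P" and p: "p \<in> P" "p \<noteq> 0"
    and family: "\<And>Y. finite Y \<Longrightarrow> polynomial_vdW (pet_family P p Y)"
  shows "polynomial_vdW P"
  unfolding polynomial_vdW_def
proof (intro allI impI)
  fix F :: "nat set" and L :: int
  assume "finite F" "0 \<le> L"
  have "\<exists>N\<ge>0. \<forall>\<chi>. range \<chi> \<subseteq> F \<longrightarrow> has_mono_config P L N \<chi> \<or> focused_config P p L N \<chi> s" for s
  proof (induction s)
    case 0
    show ?case
      by (intro exI[of _ 0]) (auto simp: focused_config_def focused_at_def)
  next
    case (Suc s)
    then obtain Ns where "0 \<le> Ns"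
      and "\<And>\<chi>. range \<chi> \<subseteq> F \<Longrightarrow> has_mono_config P L Ns \<chi> \<or> focused_config P p L Ns \<chi> s"
      by blast
    from focused_config_Suc[OF zero \<open>finite P\<close> p \<open>finite F\<close> \<open>0 \<le> L\<close> this(1)
        family[OF finite_atLeastAtMost_int] this(2)]
    obtain N where "0 \<le> N"
      and "\<And>\<chi>. range \<chi> \<subseteq> F \<Longrightarrow> has_mono_config P L N \<chi> \<or> focused_config P p L N \<chi> (Suc s)"
      by blast
    then show ?case
      by blast
  qed
  then obtain N where "0 \<le> N"
    and N: "\<And>\<chi>. range \<chi> \<subseteq> F \<Longrightarrow> has_mono_config P L N \<chi> \<or> focused_config P p L N \<chi> (Suc (card F))"
    by blast
  have "has_mono_config P L N \<chi>" if "range \<chi> \<subseteq> F" for \<chi> :: "int \<Rightarrow> nat"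
    using N[OF that] focused_config_card_le[OF _ that \<open>finite F\<close>] by fastforce
  with \<open>0 \<le> N\<close> show "\<exists>N\<ge>0. \<forall>\<chi>. range \<chi> \<subseteq> F \<longrightarrow> has_mono_config P L N \<chi>"
    by blast
qed

theorem polynomial_van_der_Waerden:
  assumes "finite P" "\<forall>q\<in>P. poly q 0 = 0"
  shows "polynomial_vdW P"
  using assms
proof (induction "pet_weight P" arbitrary: P rule: less_induct)
  case (less P)
  show ?case
  proof (cases "\<exists>q\<in>P. q \<noteq> 0")
    case False
    then show ?thesis
      by (intro polynomial_vdW_if_all_zero) blast
  next
    case True
    let ?D = "degree ` {q \<in> P. q \<noteq> 0}"
    have "finite ?D" "?D \<noteq> {}"
      using less.prems(1) True by auto
    from Min_in[OF this] obtain p where p: "p \<in> P" "p \<noteq> 0" "degree p = Min ?D"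
      by auto
    have minimal: "degree p \<le> degree q" if "q \<in> P" "q \<noteq> 0" for q
      using p(3) Min_le[of ?D] less.prems(1) that by auto
    have "1 \<le> degree p"
    proof (rule ccontr)
      assume "\<not> 1 \<le> degree p"
      then have "p = [:poly p 0:]"
        by (metis degree_0_id less_one not_le poly_0_coeff_0)
      then show False
        using p(1,2) less.prems(2) by fastforce
    qed
    show ?thesis
    proof (rule polynomial_vdW_by_focusing[OF less.prems(2,1) p(1,2)])
      fix Y :: "int set" assume "finite Y"
      show "polynomial_vdW (pet_family P p Y)"
        using pet_weight_pet_family_less[OF less.prems(1) \<open>finite Y\<close> p(1) \<open>1 \<le> degree p\<close> minimal]
          finite_pet_family[OF less.prems(1) \<open>finite Y\<close>] poly_0_pet_family[of p] p(1) less.prems(2)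
        by (intro less.hyps) auto
    qed
  qed
qed

section \<open>Large sets from polynomial values\<close>

lemma large_if_contains_poly_values:
  fixes q :: "int poly" and D :: "nat set"
  assumes "poly q 0 = 0" and "0 \<le> L"
    and in_D: "\<And>d. L \<le> d \<Longrightarrow> 1 \<le> poly q d \<and> nat (poly q d) \<in> D"
  shows "large D"
  unfolding large_def r_large_def
proof (intro allI impI)
  fix r k :: nat and chi :: "nat \<Rightarrow> nat"
  assume chi: "\<forall>x. chi x < r"
  define P where "P = (\<lambda>i. smult (int i) q) ` {..<k}"
  have "polynomial_vdW P"
    using \<open>poly q 0 = 0\<close> by (intro polynomial_van_der_Waerden) (auto simp: P_def)
  then obtain N where N: "\<And>\<chi>. range \<chi> \<subseteq> {..<r} \<Longrightarrow> has_mono_config P L N \<chi>"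
    using \<open>0 \<le> L\<close> unfolding polynomial_vdW_def by (meson finite_lessThan)
  \<comment> \<open>shift the colouring so that every base point with \<bar>a\<bar> \<le> N lands in \<nat>\<close>
  define \<chi> where "\<chi> x = chi (nat (x + (N + 1)))" for x
  have "range \<chi> \<subseteq> {..<r}"
    using chi by (auto simp: \<chi>_def)
  from N[OF this] obtain a d where a: "\<bar>a\<bar> \<le> N" and "L \<le> d"
    and mono: "\<forall>q\<in>P. \<chi> (a + poly q d) = \<chi> a"
    unfolding has_mono_config_def by blast
  have qd: "1 \<le> poly q d" "nat (poly q d) \<in> D"
    using in_D[OF \<open>L \<le> d\<close>] by auto
  show "\<exists>a d. 1 \<le> a \<and> d \<in> D \<and> (\<forall>i<k. chi (a + i * d) = chi a)"
  proof (rule exI[of _ "nat (a + (N + 1))"], rule exI[of _ "nat (poly q d)"], intro conjI allI impI)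
    show "1 \<le> nat (a + (N + 1))"
      using a by simp
    fix i assume "i < k"
    then have "\<chi> (a + int i * poly q d) = \<chi> a"
      using mono by (auto simp: P_def)
    moreover have "0 \<le> a + (N + 1)" "0 \<le> int i * poly q d"
      using a qd(1) by auto
    then have "nat (a + (N + 1) + int i * poly q d) = nat (a + (N + 1)) + i * nat (poly q d)"
      by (simp add: nat_add_distrib nat_mult_distrib)
    ultimately show "chi (nat (a + (N + 1)) + i * nat (poly q d)) = chi (nat (a + (N + 1)))"
      by (simp add: \<chi>_def add_ac)
  qed (use qd in simp)
qed

section \<open>Rational polynomials\<close>

lemma rat_poly_common_denominator:
  fixes p :: "rat poly"
  obtains M :: nat where "1 \<le> M" "\<And>i. coeff p i * of_nat M \<in> \<int>"
proof -
  define b where "b i = snd (quotient_of (coeff p i))" for i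
  define M where "M = (\<Prod>i\<le>degree p. b i)"
  have b: "0 < b i" for i
    unfolding b_def by (simp add: quotient_of_denom_pos')
  have "coeff p i * of_int M \<in> \<int>" for i
  proof (cases "i \<le> degree p")
    case True
    then obtain m where m: "M = b i * m"
      unfolding M_def by (meson atMost_iff dvdE dvd_prodI finite_atMost)
    obtain a where "coeff p i = of_int a / of_int (b i)"
      unfolding b_def by (metis prod.collapse quotient_of_div)
    then have "coeff p i * of_int M = of_int (a * m)"
      using b[of i] by (simp add: m)
    then show ?thesis
      by simp
  qed (simp add: coeff_eq_0)
  moreover have "0 < M"
    unfolding M_def using b by (intro prod_pos) auto
  ultimately show ?thesis
    by (intro that[of "nat M"]) auto
qed

lemma rat_poly_dilation_int_poly:
  fixes p :: "rat poly"
  assumes "poly p 0 = 0"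
  obtains M :: nat and q :: "int poly"
  where "1 \<le> M" "\<And>x. of_int (poly q x) = poly p (of_nat M * of_int x)"
proof -
  obtain M :: nat where "1 \<le> M" and M: "\<And>i. coeff p i * of_nat M \<in> \<int>"
    using rat_poly_common_denominator[of p] by blast
  define pM where "pM = pcompose p [:0, of_nat M:]"
  have "coeff pM i \<in> \<int>" for i
  proof (cases i)
    case 0
    then show ?thesis
      using assms by (simp add: pM_def coeff_pcompose_linear poly_0_coeff_0)
  next
    case (Suc j)
    then have "coeff pM i = of_nat M ^ j * (coeff p i * of_nat M)"
      by (simp add: pM_def coeff_pcompose_linear mult_ac)
    then show ?thesis
      using M[of i] by simp
  qed
  then obtain q where q: "pM = map_poly of_int q"
    by (rule intpolyE)
  have "of_int (poly q x) = poly (map_poly of_int q) (of_int x :: rat)" for x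
    by (induction q) (simp_all add: map_poly_pCons)
  then show ?thesis
    using \<open>1 \<le> M\<close> by (intro that[of M q]) (simp_all add: q[symmetric] pM_def poly_pcompose mult_ac)
qed

lemma rat_poly_eventually_pos:
  fixes p :: "rat poly"
  assumes "0 < lead_coeff p"
  obtains n0 :: int where "\<And>x. of_int n0 \<le> x \<Longrightarrow> 0 < poly p x"
proof -
  let ?R = "map_poly (of_rat :: rat \<Rightarrow> real) p"
  have "lead_coeff ?R = of_rat (lead_coeff p)"
    by (simp add: coeff_map_poly degree_map_poly)
  then obtain n :: real where n: "\<And>x. n \<le> x \<Longrightarrow> lead_coeff ?R \<le> poly ?R x"
    using poly_pinfty_gt_lc[of ?R] assms by auto
  have poly_R: "poly ?R (of_rat x) = of_rat (poly p x)" for x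
    by (induction p) (simp_all add: map_poly_pCons of_rat_add of_rat_mult)
  show ?thesis
  proof (rule that[of "\<lceil>n\<rceil>"])
    fix x :: rat assume "of_int \<lceil>n\<rceil> \<le> x"
    then have "n \<le> of_rat x"
      by (metis le_of_int_ceiling of_rat_less_eq of_rat_of_int_eq order_trans)
    then have "of_rat (lead_coeff p) \<le> (of_rat (poly p x) :: real)"
      using n[of "of_rat x"] poly_R \<open>lead_coeff ?R = _\<close> by simp
    then show "0 < poly p x"
      using assms by (metis of_rat_less_eq order_less_le_trans)
  qed
qed

theorem mainTheorem6:
  fixes p :: "rat poly"
  assumes "lead_coeff p > 0" and "poly p 0 = 0"
  shows "large {m :: nat. m \<ge> 1 \<and> (\<exists>n :: nat. n \<ge> 1 \<and> of_nat m = poly p (of_nat n))}"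
proof -
  obtain M :: nat and q :: "int poly" where "1 \<le> M"
    and q: "\<And>x. of_int (poly q x) = poly p (of_nat M * of_int x)"
    using rat_poly_dilation_int_poly[OF assms(2)] by blast
  obtain n0 where pos: "\<And>x. of_int n0 \<le> x \<Longrightarrow> 0 < poly p x"
    using rat_poly_eventually_pos[OF assms(1)] by blast
  show ?thesis
  proof (rule large_if_contains_poly_values[of q "max 1 n0"])
    show "poly q 0 = 0"
      using q[of 0] assms(2) by simp
    fix d assume d: "max 1 n0 \<le> d"
    have "d \<le> int M * d"
      using d \<open>1 \<le> M\<close> by (simp add: mult_le_cancel_right1)
    with d have "of_int n0 \<le> rat_of_int (int M * d)"
      by linarith
    then have "0 < rat_of_int (poly q d)"
      using pos q[of d] by simp
    then have pos_d: "1 \<le> poly q d"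
      by simp
    have "of_nat (nat (poly q d)) = poly p (of_nat (M * nat d))"
      using pos_d q[of d] d by simp
    moreover have "1 \<le> M * nat d"
      using d \<open>1 \<le> M\<close> by (simp add: Suc_le_eq)
    ultimately show "1 \<le> poly q d \<and> nat (poly q d) \<in> {m. 1 \<le> m \<and> (\<exists>n\<ge>1. of_nat m = poly p (of_nat n))}"
      using pos_d by (auto intro!: exI[of _ "M * nat d"])
  qed simp
qed

end
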